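(* Let $n\ge 2$ be an integer and let $i$ be an odd integer with $3\le i\le 2^n-1$. Then $$v_2\big(s(2^n,i+1)\big)\ge v_2\big(s(2^n,i-1)\big)-2n+4.$$
   Context: The (unsigned) Stirling numbers of the first kind $s(n,k)$ are defined by $x(x+1)\cdots(x+n-1)=\sum_{k=0}^n s(n,k)x^k$. $v_2$ denotes the $2$-adic valuation. *)

theory Defs
  imports "HOL-Combinatorics.Stirling" "HOL-Computational_Algebra.Primes"
begin

end

theory Submission
  imports Defs "HOL-Computational_Algebra.Polynomial"
begin

text \<open>
  The coefficient of x^k in P(x) = (2^e x)(2^e x + 1)...(2^e x + N - 1) is 2^(ek) s(N,k).
  For N = 2^(e+m+1) one shows P = 2^a (u (x^2 - x)^(2^m) + 2^m R) with u odd and R integral.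
  For m = 1 this follows by splitting the factors into even and odd ones; doubling N replaces
  P(x) by P(x) P(x + 2^(m+1)), and since that translation changes P only by a multiple of
  2^(m+1), the shape is squared. For even k with 2^m \<le> k < 2^(m+1), the coefficient of x^k in
  (x^2 - x)^(2^m) is \<plusminus>binom(2^m, k - 2^m), which is not divisible by 2^m. Comparing
  coefficients at k and k + 2 gives v_2(s(N,k)) + ek < a + m \<le> v_2(s(N,k+2)) + e(k+2) + m.
\<close>

definition scaled_rising_poly :: "'a \<Rightarrow> nat \<Rightarrow> 'a::comm_semiring_1 poly" where
  "scaled_rising_poly L N = (\<Prod>j<N. [:of_nat j, L:])"

lemma scaled_rising_poly_Suc:
  "scaled_rising_poly L (Suc N) = scaled_rising_poly L N * [:of_nat N, L:]"
  by (simp add: scaled_rising_poly_def)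

lemma coeff_scaled_rising_poly:
  "coeff (scaled_rising_poly L N) k = L ^ k * of_nat (stirling N k)"
proof (induction N arbitrary: k)
  case 0
  then show ?case by (cases k) (simp_all add: scaled_rising_poly_def)
next
  case (Suc N)
  have "of_nat N * of_nat (stirling N 0) = (0 :: 'a)"
    by (cases N) simp_all
  then show ?case
    by (cases k) (simp_all add: scaled_rising_poly_Suc mult_pCons_right coeff_pCons Suc.IH
        algebra_simps)
qed

lemma scaled_rising_poly_add:
  "scaled_rising_poly L (N + K) = scaled_rising_poly L N * (\<Prod>j<K. [:of_nat (N + j), L:])"
  by (induction K) (simp_all only: scaled_rising_poly_def add_Suc_right add_0_right
      prod.lessThan_Suc lessThan_0 prod.empty mult_1_right mult.assoc)

lemma scaled_rising_poly_double:
  assumes "of_nat N = L * M"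
  shows "scaled_rising_poly L (2 * N) =
           scaled_rising_poly L N * pcompose (scaled_rising_poly L N) [:M, 1:]"
proof -
  have "pcompose [:of_nat j, L:] [:M, 1:] = [:of_nat (N + j), L:]" for j
    using assms by (simp add: pcompose_pCons algebra_simps)
  then show ?thesis
    unfolding mult_2 scaled_rising_poly_add by (simp add: pcompose_prod scaled_rising_poly_def)
qed

lemma scaled_rising_poly_double_scale:
  "scaled_rising_poly (2 * L) (2 * N) =
     smult (2 ^ N) (scaled_rising_poly L N) * (\<Prod>j<N. [:2 * of_nat j + 1, 2 * L:])"
proof (induction N)
  case 0
  then show ?case by (simp add: scaled_rising_poly_def)
next
  case (Suc N)
  have "2 * Suc N = Suc (Suc (2 * N))"
    by simp
  then have "scaled_rising_poly (2 * L) (2 * Suc N) =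
      scaled_rising_poly (2 * L) (2 * N) * [:of_nat (2 * N), 2 * L:] *
        [:of_nat (Suc (2 * N)), 2 * L:]"
    by (simp only: scaled_rising_poly_Suc)
  also have "[:of_nat (2 * N), 2 * L:] = smult 2 [:of_nat N, L:]"
    by simp
  also have "of_nat (Suc (2 * N)) = 2 * of_nat N + (1 :: 'a)"
    by (simp add: add.commute)
  finally show ?case
    unfolding Suc.IH by (simp only: scaled_rising_poly_Suc prod.lessThan_Suc power_Suc
        mult_smult_left mult_smult_right smult_smult ac_simps)
qed

definition pow2_form :: "nat \<Rightarrow> int poly \<Rightarrow> bool" where
  "pow2_form m Q \<longleftrightarrow>
     (\<exists>a u R. odd u \<and> Q = smult (2 ^ a) (smult u ([:0, -1, 1:] ^ 2 ^ m) + smult (2 ^ m) R))"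

lemma pow2_formI:
  "odd u \<Longrightarrow> Q = smult (2 ^ a) (smult u ([:0, -1, 1:] ^ 2 ^ m) + smult (2 ^ m) R) \<Longrightarrow>
     pow2_form m Q"
  unfolding pow2_form_def by blast

lemma odd_linear_prod_mod2:
  "\<exists>c S. odd c \<and> (\<Prod>j<N. [:2 * int j + 1, 2 * L:]) = [:c:] + smult 2 S"
proof (induction N)
  case 0
  show ?case by (rule exI[of _ 1], rule exI[of _ 0]) simp
next
  case (Suc N)
  then obtain c S
    where "odd c" and S: "(\<Prod>j<N. [:2 * int j + 1, 2 * L:]) = [:c:] + smult 2 S"
    by blast
  define d where "d = 2 * int N + 1"
  have "(\<Prod>j<Suc N. [:2 * int j + 1, 2 * L:]) =
      ([:c:] + smult 2 S) * ([:d:] + smult 2 [:0, L:])"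
    by (simp add: S d_def)
  also have "\<dots> = [:c * d:] + smult 2 (smult c [:0, L:] + S * [:d, 2 * L:])"
    by (simp add: algebra_simps smult_add_right)
  finally show ?case
    using \<open>odd c\<close> by (intro exI[of _ "c * d"] exI) (simp add: d_def)
qed

lemma pow2_form_1_mult:
  assumes "pow2_form 1 Q" and "odd c"
  shows "pow2_form 1 (smult (2 ^ b) Q * ([:c:] + smult 2 S))"
proof -
  obtain a u R where "odd u" and Q: "Q = smult (2 ^ a) (smult u ([:0, -1, 1:] ^ 2) + smult 2 R)"
    using assms(1) unfolding pow2_form_def by auto
  have "smult (2 ^ b) (smult (2 ^ a) (smult u W + smult 2 R)) * ([:c:] + smult 2 S) =
      smult (2 ^ (b + a)) (smult (u * c) W + smult (2 ^ 1)
        (smult c R + smult u (W * S) + smult 2 (R * S)))" for W :: "int poly"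
    by (simp add: algebra_simps smult_add_right power_add)
  then show ?thesis
    using \<open>odd u\<close> \<open>odd c\<close> unfolding Q by (intro pow2_formI) auto
qed

lemma pow2_form_1_scaled_rising_poly: "pow2_form 1 (scaled_rising_poly (2 ^ e) (2 ^ (e + 2)))"
proof (induction e)
  case 0
  have "scaled_rising_poly (1 :: int) 4 = [:0, 1, 1:] * [:2, 1:] * [:3, 1:]"
    by (simp add: scaled_rising_poly_def numeral_eq_Suc)
  also have "\<dots> = smult (2 ^ 0) (smult 1 ([:0, -1, 1:] ^ 2 ^ 1) + smult (2 ^ 1) [:0, 3, 5, 4:])"
    by (simp add: power2_eq_square)
  finally show ?case
    by (intro pow2_formI[where u = 1 and a = 0 and R = "[:0, 3, 5, 4:]"]) simp_all
next
  case (Suc e)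
  obtain c S where "odd c"
    and S: "(\<Prod>j<2 ^ (e + 2). [:2 * int j + 1, 2 * 2 ^ e:]) = [:c:] + smult 2 S"
    using odd_linear_prod_mod2 by blast
  have "scaled_rising_poly (2 ^ Suc e) (2 ^ (Suc e + 2)) =
      smult (2 ^ 2 ^ (e + 2)) (scaled_rising_poly (2 ^ e) (2 ^ (e + 2))) * ([:c:] + smult 2 S)"
    using scaled_rising_poly_double_scale[of "2 ^ e :: int" "2 ^ (e + 2)"] unfolding S by simp
  then show ?case
    using pow2_form_1_mult[OF Suc.IH \<open>odd c\<close>] by simp
qed

lemma pcompose_translate_eq:
  fixes p :: "'a::comm_ring_1 poly"
  shows "\<exists>T. pcompose p [:M, 1:] = p + smult M T"
proof (induction p)
  case 0
  show ?case by (rule exI[of _ 0]) simp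
next
  case (pCons a p)
  then obtain T where "pcompose p [:M, 1:] = p + smult M T"
    by blast
  then have "pcompose (pCons a p) [:M, 1:] =
      pCons a p + smult M (pcompose p [:M, 1:] + pCons 0 T)"
    by (simp add: pcompose_pCons algebra_simps smult_add_right)
  then show ?case
    by blast
qed

lemma pow2_form_mult_translate:
  assumes "pow2_form (Suc k) Q"
  shows "pow2_form (Suc (Suc k)) (Q * pcompose Q [:2 ^ Suc (Suc k), 1:])"
proof -
  define W where "W = [:0, -1, 1 :: int:] ^ 2 ^ Suc k"
  define M :: int where "M = 2 ^ Suc (Suc k)"
  obtain a u R where "odd u" and Q: "Q = smult (2 ^ a) (smult u W + smult (2 ^ Suc k) R)"
    using assms unfolding pow2_form_def W_def by blast
  define P where "P = smult u W + smult (2 ^ Suc k) R"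
  obtain C where C: "pcompose P [:M, 1:] = P + smult M C"
    using pcompose_translate_eq by blast
  have "Q = smult (2 ^ a) P"
    by (simp add: Q P_def)
  then have "Q * pcompose Q [:M, 1:] = smult (2 ^ (a + a)) (P * P + smult M (P * C))"
    by (simp add: pcompose_smult C power_add distrib_left smult_add_right mult_ac)
  also have "P * P = smult (u * u) (W * W) + smult M (smult u (W * R) + smult (2 ^ k) (R * R))"
    by (simp add: P_def M_def algebra_simps smult_add_right numeral_poly)
  finally have "Q * pcompose Q [:M, 1:] = smult (2 ^ (a + a))
      (smult (u * u) (W * W) + smult M (smult u (W * R) + smult (2 ^ k) (R * R) + P * C))"
    by (simp add: smult_add_right)
  moreover have "W * W = [:0, -1, 1:] ^ 2 ^ Suc (Suc k)"
    unfolding W_def by (simp only: power_Suc mult_2 power_add)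
  ultimately show ?thesis
    using \<open>odd u\<close> unfolding M_def by (intro pow2_formI) auto
qed

lemma pow2_form_scaled_rising_poly:
  "pow2_form (Suc k) (scaled_rising_poly (2 ^ e) (2 ^ (e + k + 2)))"
proof (induction k)
  case 0
  show ?case using pow2_form_1_scaled_rising_poly[of e] by simp
next
  case (Suc k)
  have "of_nat (2 ^ (e + k + 2)) = (2 ^ e :: int) * 2 ^ Suc (Suc k)"
    by (simp add: power_add)
  from scaled_rising_poly_double[OF this]
  show ?case
    using pow2_form_mult_translate[OF Suc.IH] by (simp add: ac_simps)
qed

lemma even_binomial_pow2:
  assumes "0 < c" and "c < 2 ^ m"
  shows "even ((2 :: nat) ^ m choose c)"
proof (rule ccontr)
  assume "odd ((2 :: nat) ^ m choose c)"
  then have "coprime ((2 :: nat) ^ m) (2 ^ m choose c)"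
    by simp
  moreover have "(2 :: nat) ^ m dvd c * (2 ^ m choose c)"
    using times_binomial_minus1_eq[OF \<open>0 < c\<close>, of "2 ^ m"] by simp
  ultimately have "(2 :: nat) ^ m dvd c"
    using coprime_dvd_mult_left_iff by blast
  then show False
    using assms by (simp add: nat_dvd_not_less)
qed

lemma odd_binomial_pow2_minus_1:
  "c < 2 ^ m \<Longrightarrow> odd ((2 :: nat) ^ m - 1 choose c)"
proof (induction c)
  case 0
  show ?case by simp
next
  case (Suc c)
  have "(2 :: nat) ^ m choose Suc c = (2 ^ m - 1 choose c) + (2 ^ m - 1 choose Suc c)"
    using binomial_Suc_Suc[of "2 ^ m - 1" c] by simp
  then show ?case
    using Suc even_binomial_pow2[of "Suc c" m] by auto
qed

lemma pow2_not_dvd_binomial_pow2: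
  assumes "0 < m" and "even b" and "b < 2 ^ m"
  shows "\<not> (2 :: nat) ^ m dvd (2 ^ m choose b)"
proof
  assume dvd: "(2 :: nat) ^ m dvd (2 ^ m choose b)"
  show False
  proof (cases "b = 0")
    case True
    then show False using dvd \<open>0 < m\<close> by simp
  next
    case False
    have "b * (2 ^ m choose b) = 2 ^ m * (2 ^ m - 1 choose (b - 1))"
      using times_binomial_minus1_eq[of b "2 ^ m"] False by simp
    moreover have "(2 :: nat) * 2 ^ m dvd b * (2 ^ m choose b)"
      using dvd \<open>even b\<close> by (simp add: mult_dvd_mono)
    ultimately have "even (2 ^ m - 1 choose (b - 1))"
      by simp
    moreover have "b - 1 < 2 ^ m"
      using \<open>b < 2 ^ m\<close> by linarith
    ultimately show False
      using odd_binomial_pow2_minus_1 by blast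
  qed
qed

lemma coeff_x2_minus_x_power:
  assumes "b \<le> n"
  shows "coeff ([:0, -1, 1 :: int:] ^ n) (n + b) = (-1) ^ (n - b) * int (n choose b)"
proof -
  have "[:0, -1, 1 :: int:] ^ n = monom 1 n * [:-1, 1:] ^ n"
    by (simp add: monom_altdef flip: power_mult_distrib)
  then show ?thesis
    using coeff_linear_poly_power[OF assms, of "-1 :: int" 1] by (simp add: coeff_monom_mult)
qed

lemma pow2_not_dvd_coeff_x2_minus_x_power:
  assumes "0 < m" and "even b" and "b < 2 ^ m"
  shows "\<not> (2 :: int) ^ m dvd coeff ([:0, -1, 1:] ^ 2 ^ m) (2 ^ m + b)"
proof -
  have "\<not> (2 :: int) ^ m dvd int (2 ^ m choose b)"
    using pow2_not_dvd_binomial_pow2[OF assms]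
    by (metis int_dvd_int_iff of_nat_numeral of_nat_power)
  then show ?thesis
    using assms by (simp add: coeff_x2_minus_x_power)
qed

lemma stirling_gt_0: "0 < k \<Longrightarrow> k \<le> n \<Longrightarrow> 0 < stirling n k"
proof (induction n k rule: stirling.induct)
  case (4 n k)
  show ?case
  proof (cases k)
    case 0
    then show ?thesis by (simp add: stirling_Suc_n_1 del: stirling.simps)
  next
    case (Suc k')
    then show ?thesis using 4 by simp
  qed
qed simp_all

lemma le_multiplicity_add_if_dvd:
  fixes p s :: nat
  assumes "prime p" and "s \<noteq> 0" and "int p ^ a dvd int p ^ c * int s"
  shows "a \<le> multiplicity p s + c"
proof (rule ccontr)
  assume "\<not> a \<le> multiplicity p s + c"
  then have "int p ^ (c + Suc (multiplicity p s)) dvd int p ^ a"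
    by (intro le_imp_power_dvd) simp
  then have "int p ^ c * int p ^ Suc (multiplicity p s) dvd int p ^ c * int s"
    unfolding power_add using assms(3) by (rule dvd_trans)
  then have "p ^ Suc (multiplicity p s) dvd s"
    using \<open>prime p\<close> by (simp flip: of_nat_power of_nat_mult)
  moreover have "\<not> is_unit p"
    using \<open>prime p\<close> not_prime_unit by blast
  ultimately show False
    using power_dvd_iff_le_multiplicity[OF \<open>s \<noteq> 0\<close>] by (simp del: power_Suc)
qed

lemma multiplicity_add_less_if_not_dvd:
  fixes p s :: nat
  assumes "prime p" and "int p ^ c * int s = int p ^ a * y" and "\<not> int p ^ m dvd y"
  shows "multiplicity p s + c < a + m"
proof (rule ccontr)
  assume "\<not> multiplicity p s + c < a + m"
  then have "int p ^ (a + m) dvd int p ^ (c + multiplicity p s)"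
    by (intro le_imp_power_dvd) simp
  also have "\<dots> dvd int p ^ c * int s"
    unfolding power_add by (intro mult_dvd_mono) (simp_all add: multiplicity_dvd flip: of_nat_power)
  finally have "int p ^ a * int p ^ m dvd int p ^ a * y"
    by (simp add: assms(2) power_add)
  then show False
    using assms(1,3) by simp
qed

lemma multiplicity_stirling_pow2_less:
  assumes "0 < m" and "2 ^ m \<le> k" and "k < 2 ^ (m + 1)" and "even k"
  shows "multiplicity 2 (stirling (2 ^ (e + m + 1)) k)
           < multiplicity 2 (stirling (2 ^ (e + m + 1)) (k + 2)) + 2 * e + m"
proof -
  define N :: nat where "N = 2 ^ (e + m + 1)"
  define W where "W = [:0, -1, 1 :: int:] ^ 2 ^ m"
  obtain m' where m': "m = Suc m'"
    using \<open>0 < m\<close> gr0_implies_Suc by blast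
  obtain a u R where "odd u"
    and form: "scaled_rising_poly (2 ^ e) N = smult (2 ^ a) (smult u W + smult (2 ^ m) R)"
    using pow2_form_scaled_rising_poly[of m' e] unfolding pow2_form_def N_def W_def m' by auto
  have coeffs:
    "2 ^ (e * j) * int (stirling N j) = 2 ^ a * (u * coeff W j + 2 ^ m * coeff R j)" for j
    using arg_cong[OF form, of "\<lambda>p. coeff p j"]
    by (simp add: coeff_scaled_rising_poly power_mult)
  have "odd (k + 1)" and "even ((2 :: nat) ^ (m + 1))"
    using \<open>even k\<close> by simp_all
  then have "k + 1 \<noteq> 2 ^ (m + 1)"
    by metis
  then have "k + 2 \<le> 2 ^ (m + 1)"
    using \<open>k < 2 ^ (m + 1)\<close> by linarith
  also have "\<dots> \<le> N"
    unfolding N_def by (intro power_increasing) simp_all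
  finally have "k + 2 \<le> N" .
  moreover have "0 < k"
    by (rule order.strict_trans2[OF _ \<open>2 ^ m \<le> k\<close>]) simp
  ultimately have "stirling N k \<noteq> 0" and "stirling N (k + 2) \<noteq> 0"
    using stirling_gt_0 by simp_all
  define b where "b = k - 2 ^ m"
  have "k = 2 ^ m + b" and "even b" and "b < 2 ^ m"
    using assms by (auto simp: b_def)
  then have "\<not> 2 ^ m dvd coeff W k"
    using pow2_not_dvd_coeff_x2_minus_x_power[OF \<open>0 < m\<close>] unfolding W_def by simp
  then have "\<not> 2 ^ m dvd u * coeff W k"
    using \<open>odd u\<close> by (simp add: coprime_dvd_mult_right_iff)
  then have "\<not> 2 ^ m dvd u * coeff W k + 2 ^ m * coeff R k"
    by (simp add: dvd_add_left_iff)
  then have "multiplicity 2 (stirling N k) + e * k < a + m"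
    using multiplicity_add_less_if_not_dvd[of 2 "e * k"] coeffs by simp
  moreover have "a \<le> multiplicity 2 (stirling N (k + 2)) + e * (k + 2)"
    using \<open>stirling N (k + 2) \<noteq> 0\<close> coeffs[of "k + 2"]
    by (intro le_multiplicity_add_if_dvd) simp_all
  ultimately show ?thesis
    unfolding N_def by (simp add: algebra_simps)
qed

theorem mainTheorem10:
  fixes n i :: nat
  assumes "n \<ge> 2" and "odd i" and "3 \<le> i" and "i \<le> 2 ^ n - 1"
  shows "int (multiplicity (2::nat) (stirling (2 ^ n) (i + 1)))
           \<ge> int (multiplicity (2::nat) (stirling (2 ^ n) (i - 1))) - 2 * int n + 4"
proof -
  define k where "k = i - 1"
  have "even k" and "2 \<le> k" and "k < 2 ^ n" and "i + 1 = k + 2"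
    using assms by (auto simp: k_def)
  obtain m where m: "2 ^ m \<le> k" "k < 2 ^ (m + 1)"
    using ex_power_ivl1[of 2 k] \<open>2 \<le> k\<close> by auto
  have "0 < m"
    using m \<open>2 \<le> k\<close> by (cases m) auto
  have "(2 :: nat) ^ m < 2 ^ n"
    using m(1) \<open>k < 2 ^ n\<close> by linarith
  then have "m < n"
    by simp
  define e where "e = n - m - 1"
  have n: "n = e + m + 1"
    using \<open>m < n\<close> by (simp add: e_def)
  show ?thesis
    using multiplicity_stirling_pow2_less[OF \<open>0 < m\<close> m \<open>even k\<close>, of e] \<open>0 < m\<close>
    unfolding \<open>i + 1 = k + 2\<close> k_def[symmetric] n by simp
qed

end
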